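(* Assume $E\setminus T\ne\emptyset$ and $\epsilon\ge0$. Let $f\in\mathbb{R}^E$ be feasible with $\xi_r(f)\le(1+\epsilon)\xi_r(f^* )$. Let $g_0=f$ and for $j\ge1$ let $g_j=g_{j-1}-\frac{\Delta_{e_j}(g_{j-1})}{R_{e_j}}c_{e_j}$, where $e_1,e_2,\dots$ are drawn independently from $p$; let $w_j$ be the tree induced voltages of $g_j$. Let $K'$ be uniform on $\{0,1,\dots,\lceil\tau\rceil-1\}$, independent of the $e_j$. Then \[ \mathbb{E}\big[\mathrm{gap}(g_{K'},w_{K'})\big]\le\epsilon\,\xi_r(f^* ). \]
   Context: Let $G=(V,E,w)$ be a connected undirected graph with resistances $r_e=1/w_e>0$. Each edge has a fixed orientation $(a,b)$; for $f\in\mathbb{R}^E$ write $f(b,a):=-f(a,b)$. The incidence matrix $B\in\mathbb{R}^{E\times V}$ has $B_{(a,b),c}=1$ if $c=a$, $-1$ if $c=b$, $0$ otherwise; $R=\mathrm{diag}(r_e)_{e\in E}$; $L=B^TR^{-1}B$. The energy of $f$ is $\xi_r(f)=f^TRf$. Fix $\chi\in\mathbb{R}^V$ with $\sum_a\chi(a)=0$; $f$ is feasible if $B^Tf=\chi$; $f^*$ is the unique feasible $f$ minimizing $\xi_r(f)$. The dual energy of $v\in\mathbb{R}^V$ is $\zeta_r(v)=2v^T\chi-v^TLv$ and $\mathrm{gap}(f,v)=\xi_r(f)-\zeta_r(v)$. Let $T\subseteq E$ be a spanning tree. For vertices $a,b$, $\pi_{(a,b)}\in\mathbb{R}^E$ is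 the unit flow from $a$ to $b$ along the unique $a$–$b$ path in $T$. For $e=(a,b)\in E\setminus T$, $c_e=\mathbf{1}_e-\pi_{(a,b)}$, $R_e=c_e^TRc_e$, $\Delta_e(f)=f^TRc_e$. The tree condition number is $\tau=\sum_{e\in E\setminus T}R_e/r_e$ and $p$ is the distribution on $E\setminus T$ with $p_e=\frac{R_e}{r_e\tau}$. Fix a root $s\in V$; the tree induced voltages of $f$ are $v(a)=\sum r_{e'}f(e')$, summing over the edges $e'$ of the tree path from $a$ to $s$, each traversed in the direction of the path (with the antisymmetry convention). *)

theory Defs
  imports "HOL-Probability.Probability"
begin

text \<open>Graph: finite vertex set V, edges are oriented pairs (a,b) in E (the fixed
orientation of each undirected edge). Flows and resistances are functions on pairs;
only their values on E matter.\<close>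

definition incid :: "'v \<times> 'v \<Rightarrow> 'v \<Rightarrow> real" where
  "incid e c = (if c = fst e then 1 else if c = snd e then -1 else 0)"

definition feasible :: "'v set \<Rightarrow> ('v \<times> 'v) set \<Rightarrow> ('v \<Rightarrow> real) \<Rightarrow> ('v \<times> 'v \<Rightarrow> real) \<Rightarrow> bool" where
  "feasible V E chi f \<longleftrightarrow> (\<forall>c\<in>V. (\<Sum>e\<in>E. incid e c * f e) = chi c)"

definition energy :: "('v \<times> 'v) set \<Rightarrow> ('v \<times> 'v \<Rightarrow> real) \<Rightarrow> ('v \<times> 'v \<Rightarrow> real) \<Rightarrow> real" where
  "energy E r f = (\<Sum>e\<in>E. f e * r e * f e)"

definition lap :: "('v \<times> 'v) set \<Rightarrow> ('v \<times> 'v \<Rightarrow> real) \<Rightarrow> 'v \<Rightarrow> 'v \<Rightarrow> real" where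
  "lap E r a b = (\<Sum>e\<in>E. incid e a * (1 / r e) * incid e b)"

definition dual_energy :: "'v set \<Rightarrow> ('v \<times> 'v) set \<Rightarrow> ('v \<times> 'v \<Rightarrow> real) \<Rightarrow> ('v \<Rightarrow> real) \<Rightarrow> ('v \<Rightarrow> real) \<Rightarrow> real" where
  "dual_energy V E r chi v = 2 * (\<Sum>a\<in>V. v a * chi a) - (\<Sum>a\<in>V. \<Sum>b\<in>V. v a * lap E r a b * v b)"

definition gap :: "'v set \<Rightarrow> ('v \<times> 'v) set \<Rightarrow> ('v \<times> 'v \<Rightarrow> real) \<Rightarrow> ('v \<Rightarrow> real) \<Rightarrow> ('v \<times> 'v \<Rightarrow> real) \<Rightarrow> ('v \<Rightarrow> real) \<Rightarrow> real" where
  "gap V E r chi f v = energy E r f - dual_energy V E r chi v"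

definition usym :: "('v \<times> 'v) set \<Rightarrow> ('v \<times> 'v) set" where
  "usym S = {(a, b). (a, b) \<in> S \<or> (b, a) \<in> S}"

definition connected_on :: "'v set \<Rightarrow> ('v \<times> 'v) set \<Rightarrow> bool" where
  "connected_on V S \<longleftrightarrow> (\<forall>a\<in>V. \<forall>b\<in>V. (a, b) \<in> (usym S)\<^sup>*)"

text \<open>Spanning tree: a minimally connected spanning subgraph (connected, and every
edge is a bridge, i.e. acyclic).\<close>

definition spanning_tree :: "'v set \<Rightarrow> ('v \<times> 'v) set \<Rightarrow> ('v \<times> 'v) set \<Rightarrow> bool" where
  "spanning_tree V E T \<longleftrightarrow> T \<subseteq> E \<and> connected_on V T \<and>
     (\<forall>(a, b)\<in>T. (a, b) \<notin> (usym (T - {(a, b)}))\<^sup>*)"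

definition is_tpath :: "('v \<times> 'v) set \<Rightarrow> 'v list \<Rightarrow> 'v \<Rightarrow> 'v \<Rightarrow> bool" where
  "is_tpath T vs a b \<longleftrightarrow> vs \<noteq> [] \<and> hd vs = a \<and> last vs = b \<and> distinct vs \<and>
     (\<forall>i. Suc i < length vs \<longrightarrow> (vs ! i, vs ! Suc i) \<in> T \<or> (vs ! Suc i, vs ! i) \<in> T)"

definition tpath :: "('v \<times> 'v) set \<Rightarrow> 'v \<Rightarrow> 'v \<Rightarrow> 'v list" where
  "tpath T a b = (THE vs. is_tpath T vs a b)"

definition tflow :: "('v \<times> 'v) set \<Rightarrow> 'v \<Rightarrow> 'v \<Rightarrow> 'v \<times> 'v \<Rightarrow> real" where
  "tflow T a b e = (let vs = tpath T a b in
     (\<Sum>i<length vs - 1. (if e = (vs ! i, vs ! Suc i) then 1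
                          else if e = (vs ! Suc i, vs ! i) then -1 else 0)))"

definition cvec :: "('v \<times> 'v) set \<Rightarrow> 'v \<times> 'v \<Rightarrow> 'v \<times> 'v \<Rightarrow> real" where
  "cvec T e x = (if x = e then 1 else 0) - tflow T (fst e) (snd e) x"

definition Rres :: "('v \<times> 'v) set \<Rightarrow> ('v \<times> 'v \<Rightarrow> real) \<Rightarrow> ('v \<times> 'v) set \<Rightarrow> 'v \<times> 'v \<Rightarrow> real" where
  "Rres E r T e = (\<Sum>x\<in>E. cvec T e x * r x * cvec T e x)"

definition Delta :: "('v \<times> 'v) set \<Rightarrow> ('v \<times> 'v \<Rightarrow> real) \<Rightarrow> ('v \<times> 'v) set \<Rightarrow> 'v \<times> 'v \<Rightarrow> ('v \<times> 'v \<Rightarrow> real) \<Rightarrow> real" where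
  "Delta E r T e f = (\<Sum>x\<in>E. f x * r x * cvec T e x)"

definition tcond :: "('v \<times> 'v) set \<Rightarrow> ('v \<times> 'v \<Rightarrow> real) \<Rightarrow> ('v \<times> 'v) set \<Rightarrow> real" where
  "tcond E r T = (\<Sum>e\<in>E - T. Rres E r T e / r e)"

definition pdist :: "('v \<times> 'v) set \<Rightarrow> ('v \<times> 'v \<Rightarrow> real) \<Rightarrow> ('v \<times> 'v) set \<Rightarrow> ('v \<times> 'v) pmf" where
  "pdist E r T = embed_pmf (\<lambda>e. if e \<in> E - T then Rres E r T e / (r e * tcond E r T) else 0)"

definition cstep :: "('v \<times> 'v) set \<Rightarrow> ('v \<times> 'v \<Rightarrow> real) \<Rightarrow> ('v \<times> 'v) set \<Rightarrow> ('v \<times> 'v \<Rightarrow> real) \<Rightarrow> 'v \<times> 'v \<Rightarrow> ('v \<times> 'v \<Rightarrow> real)" where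
  "cstep E r T g e = (\<lambda>x. g x - Delta E r T e g / Rres E r T e * cvec T e x)"

definition tvolt :: "('v \<times> 'v) set \<Rightarrow> ('v \<times> 'v \<Rightarrow> real) \<Rightarrow> ('v \<times> 'v) set \<Rightarrow> 'v \<Rightarrow> ('v \<times> 'v \<Rightarrow> real) \<Rightarrow> 'v \<Rightarrow> real" where
  "tvolt E r T s f a = (let vs = tpath T a s in
     (\<Sum>i<length vs - 1. (let x = vs ! i; y = vs ! Suc i in
        if (x, y) \<in> E then r (x, y) * f (x, y) else r (y, x) * (- f (y, x)))))"

text \<open>List of k independent draws from p (in order e_1, ..., e_k).\<close>

fun iid_list :: "'a pmf \<Rightarrow> nat \<Rightarrow> 'a list pmf" where
  "iid_list p 0 = return_pmf []"
| "iid_list p (Suc k) = bind_pmf (iid_list p k) (\<lambda>es. map_pmf (\<lambda>e. es @ [e]) p)"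

end

theory Submission
  imports Defs
begin

text \<open>For a feasible flow g with tree-induced voltages v, the duality gap is
  \<open>\<Sum>\<^sub>e (g\<^sub>e r\<^sub>e - (v\<^sub>a - v\<^sub>b))\<^sup>2 / r\<^sub>e\<close>; the tree edges contribute nothing, and each
  off-tree edge e contributes \<open>\<Delta>\<^sub>e(g)\<^sup>2 / r\<^sub>e\<close>. A cycle update along e lowers the energy by
  exactly \<open>\<Delta>\<^sub>e(g)\<^sup>2 / R\<^sub>e\<close>, so with \<open>p\<^sub>e = R\<^sub>e / (r\<^sub>e \<tau>)\<close> the expected energy decrease of one
  random step is \<open>gap(g, v) / \<tau>\<close>. Averaging over the first \<open>N = \<lceil>\<tau>\<rceil>\<close> steps telescopes:
  the expected gap at a uniform random time \<open>K' < N\<close> is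
  \<open>\<tau> (\<xi>(f) - \<bbbE> \<xi>(g\<^sub>N)) / N \<le> \<xi>(f) - \<xi>(f\<^sup>*) \<le> \<epsilon> \<xi>(f\<^sup>*)\<close>.\<close>

section \<open>Random descent stopped at a uniform time\<close>

lemma set_pmf_iid_list: "es \<in> set_pmf (iid_list p k) \<Longrightarrow> set es \<subseteq> set_pmf p"
  by (induction k arbitrary: es) fastforce+

lemma finite_set_pmf_iid_list: "finite (set_pmf p) \<Longrightarrow> finite (set_pmf (iid_list p k))"
  by (induction k) auto

lemma expectation_iid_list_Suc:
  fixes h :: "'a list \<Rightarrow> real"
  assumes fin: "finite (set_pmf p)"
  shows "measure_pmf.expectation (iid_list p (Suc k)) h =
         measure_pmf.expectation (iid_list p k) (\<lambda>es. measure_pmf.expectation p (\<lambda>e. h (es @ [e])))"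
proof -
  let ?A = "set_pmf (iid_list p k)"
  have fin_A: "finite ?A" using finite_set_pmf_iid_list[OF fin] .
  have "measure_pmf.expectation (iid_list p (Suc k)) h =
     (\<Sum>es\<in>?A. pmf (iid_list p k) es *\<^sub>R measure_pmf.expectation (map_pmf (\<lambda>e. es @ [e]) p) h)"
    by (simp only: iid_list.simps, rule pmf_expectation_bind[OF fin_A]) (auto simp: fin)
  also have "\<dots> = (\<Sum>es\<in>?A. measure_pmf.expectation p (\<lambda>e. h (es @ [e])) * pmf (iid_list p k) es)"
    by (simp add: mult.commute)
  also have "\<dots> = measure_pmf.expectation (iid_list p k) (\<lambda>es. measure_pmf.expectation p (\<lambda>e. h (es @ [e])))"
    by (rule integral_measure_pmf_real[symmetric]) (auto simp: fin_A)
  finally show ?thesis .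
qed

locale random_descent =
  fixes p :: "'e pmf" and step :: "'e \<Rightarrow> 'g \<Rightarrow> 'g" and feas :: "'g \<Rightarrow> bool"
    and \<xi> gp :: "'g \<Rightarrow> real" and \<tau> :: real
  assumes finite_support: "finite (set_pmf p)"
    and feas_step: "feas g \<Longrightarrow> e \<in> set_pmf p \<Longrightarrow> feas (step e g)"
    and gap_eq_expected_decrease:
      "feas g \<Longrightarrow> gp g = \<tau> * (\<xi> g - measure_pmf.expectation p (\<lambda>e. \<xi> (step e g)))"
begin

definition expected_\<xi> :: "'g \<Rightarrow> nat \<Rightarrow> real" where
  "expected_\<xi> g k = measure_pmf.expectation (iid_list p k) (\<lambda>es. \<xi> (fold step es g))"

lemma expected_\<xi>_0 [simp]: "expected_\<xi> g 0 = \<xi> g"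
  by (simp add: expected_\<xi>_def)

lemma feas_fold: "feas g \<Longrightarrow> set es \<subseteq> set_pmf p \<Longrightarrow> feas (fold step es g)"
  by (induction es rule: rev_induct) (auto simp: feas_step)

lemma expected_gap_iid_list:
  assumes "feas g"
  shows "measure_pmf.expectation (iid_list p k) (\<lambda>es. gp (fold step es g))
           = \<tau> * (expected_\<xi> g k - expected_\<xi> g (Suc k))"
proof -
  have "measure_pmf.expectation (iid_list p k) (\<lambda>es. gp (fold step es g)) =
     measure_pmf.expectation (iid_list p k)
       (\<lambda>es. \<tau> * (\<xi> (fold step es g) - measure_pmf.expectation p (\<lambda>e. \<xi> (step e (fold step es g)))))"
    using assms
    by (intro integral_cong_AE)
       (auto simp: AE_measure_pmf_iff gap_eq_expected_decrease feas_fold dest!: set_pmf_iid_list)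
  then show ?thesis
    unfolding expected_\<xi>_def expectation_iid_list_Suc[OF finite_support]
    by (simp add: integral_diff integrable_measure_pmf_finite finite_set_pmf_iid_list finite_support)
qed

lemma expected_gap_uniform_stop:
  assumes "feas g" and "N > 0"
  shows "measure_pmf.expectation
           (bind_pmf (pmf_of_set {0..<N}) (\<lambda>k. map_pmf (\<lambda>es. fold step es g) (iid_list p k))) gp
         = \<tau> * (\<xi> g - expected_\<xi> g N) / N"
proof -
  have "measure_pmf.expectation
           (bind_pmf (pmf_of_set {0..<N}) (\<lambda>k. map_pmf (\<lambda>es. fold step es g) (iid_list p k))) gp
        = (\<Sum>k<N. \<tau> * (expected_\<xi> g k - expected_\<xi> g (Suc k)) / N)"
    using assms
    by (subst pmf_expectation_bind_pmf_of_set)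
       (auto simp: expected_gap_iid_list finite_set_pmf_iid_list finite_support atLeast0LessThan
        divide_inverse mult.commute)
  also have "\<dots> = \<tau> * (\<xi> g - expected_\<xi> g N) / N"
    by (simp add: sum_divide_distrib[symmetric] sum_distrib_left[symmetric] sum_lessThan_telescope')
  finally show ?thesis .
qed

lemma expected_gap_uniform_stop_le:
  assumes f: "feas f" and lower: "\<And>g. feas g \<Longrightarrow> m \<le> \<xi> g" and "\<tau> > 0"
    and near_opt: "\<xi> f \<le> (1 + \<epsilon>) * m"
  shows "measure_pmf.expectation
           (bind_pmf (pmf_of_set {0..<nat \<lceil>\<tau>\<rceil>}) (\<lambda>k. map_pmf (\<lambda>es. fold step es f) (iid_list p k))) gp
         \<le> \<epsilon> * m"
proof -
  define N where "N = nat \<lceil>\<tau>\<rceil>"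
  have "N > 0" and "\<tau> \<le> N" using \<open>\<tau> > 0\<close> unfolding N_def by linarith+
  have "m \<le> expected_\<xi> f N"
  proof -
    have "measure_pmf.expectation (iid_list p N) (\<lambda>_. m) \<le> expected_\<xi> f N"
      unfolding expected_\<xi>_def using f
      by (intro integral_mono_AE)
         (auto simp: AE_measure_pmf_iff lower feas_fold integrable_measure_pmf_finite
          finite_set_pmf_iid_list finite_support dest!: set_pmf_iid_list)
    then show ?thesis by simp
  qed
  then have "\<tau> * (\<xi> f - expected_\<xi> f N) / N \<le> \<tau> * (\<xi> f - m) / N"
    using \<open>\<tau> > 0\<close> by (intro divide_right_mono mult_left_mono) auto
  also have "\<dots> \<le> \<xi> f - m"
    using \<open>\<tau> \<le> N\<close> \<open>N > 0\<close> lower[OF f] by (simp add: divide_le_eq mult.commute mult_right_mono)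
  finally show ?thesis
    using expected_gap_uniform_stop[OF f \<open>N > 0\<close>] near_opt by (simp add: N_def algebra_simps)
qed

end

section \<open>Paths in a forest\<close>

definition forest :: "('v \<times> 'v) set \<Rightarrow> bool" where
  "forest T \<longleftrightarrow> (\<forall>(a, b)\<in>T. (a, b) \<notin> (usym (T - {(a, b)}))\<^sup>*)"

lemma usym_converse [simp]: "(usym S)\<inverse> = usym S"
  by (auto simp: usym_def)

lemma rtrancl_usym_sym: "(a, b) \<in> (usym S)\<^sup>* \<Longrightarrow> (b, a) \<in> (usym S)\<^sup>*"
  by (metis rtrancl_converseI usym_converse)

lemma walk_in_rtrancl:
  "vs \<noteq> [] \<Longrightarrow> (\<And>i. Suc i < length vs \<Longrightarrow> (vs ! i, vs ! Suc i) \<in> R) \<Longrightarrow> (hd vs, last vs) \<in> R\<^sup>*"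
proof (induction vs)
  case (Cons x xs)
  show ?case
  proof (cases xs)
    case (Cons y ys)
    have "(x, y) \<in> R" using Cons.prems(2)[of 0] \<open>xs = y # ys\<close> by simp
    moreover have "(hd xs, last xs) \<in> R\<^sup>*"
      using Cons.IH Cons.prems(2) \<open>xs = y # ys\<close> by (metis Suc_less_eq length_Cons list.discI nth_Cons_Suc)
    ultimately show ?thesis using \<open>xs = y # ys\<close> by (simp add: converse_rtrancl_into_rtrancl)
  qed simp
qed simp

lemma is_tpath_step: "is_tpath T vs a b \<Longrightarrow> Suc i < length vs \<Longrightarrow> (vs ! i, vs ! Suc i) \<in> usym T"
  unfolding is_tpath_def usym_def by auto

lemma is_tpath_take:
  assumes "is_tpath T vs a b" and "i < length vs"
  shows "is_tpath T (take (Suc i) vs) a (vs ! i)"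
proof -
  have "last (take (Suc i) vs) = vs ! i" using assms(2) by (simp add: take_Suc_conv_app_nth)
  then show ?thesis using assms unfolding is_tpath_def by auto
qed

lemma all_steps_Cons:
  "(\<forall>i. Suc i < length (x # ys) \<longrightarrow> P ((x # ys) ! i) ((x # ys) ! Suc i)) \<longleftrightarrow>
     (ys \<noteq> [] \<longrightarrow> P x (hd ys)) \<and> (\<forall>i. Suc i < length ys \<longrightarrow> P (ys ! i) (ys ! Suc i))"
    (is "?L \<longleftrightarrow> ?R")
proof
  assume L: ?L
  have "P x (hd ys)" if "ys \<noteq> []" using L[rule_format, of 0] that by (simp add: hd_conv_nth)
  moreover have "P (ys ! i) (ys ! Suc i)" if "Suc i < length ys" for i
    using L[rule_format, of "Suc i"] that by simp
  ultimately show ?R by blast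
next
  assume ?R
  show ?L
  proof (intro allI impI)
    fix i assume "Suc i < length (x # ys)"
    with \<open>?R\<close> show "P ((x # ys) ! i) ((x # ys) ! Suc i)" by (cases i) (auto simp: hd_conv_nth)
  qed
qed

lemma is_tpath_Cons_Cons:
  "is_tpath T (x # y # vs) a b \<longleftrightarrow>
     x = a \<and> (x, y) \<in> usym T \<and> x \<notin> set (y # vs) \<and> is_tpath T (y # vs) y b"
  unfolding is_tpath_def all_steps_Cons[where P = "\<lambda>u w. (u, w) \<in> T \<or> (w, u) \<in> T"] by (auto simp: usym_def)

lemma is_tpath_singleton: "is_tpath T [x] a b \<longleftrightarrow> x = a \<and> a = b"
  by (auto simp: is_tpath_def)

lemma is_tpath_same_ends:
  assumes "is_tpath T vs a a"
  shows "vs = [a]"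
proof (cases vs rule: remdups_adj.cases)
  case (3 x y ys)
  then have "x \<notin> set (y # ys)" "x = last (y # ys)" using assms by (auto simp: is_tpath_def)
  then show ?thesis using last_in_set by blast
qed (use assms in \<open>auto simp: is_tpath_def\<close>)

lemma is_tpath_exists: "(a, b) \<in> (usym T)\<^sup>* \<Longrightarrow> \<exists>vs. is_tpath T vs a b"
proof (induction rule: rtrancl_induct)
  case base
  show ?case by (rule exI[of _ "[a]"]) (simp add: is_tpath_def)
next
  case (step b c)
  then obtain vs where vs: "is_tpath T vs a b" by blast
  show ?case
  proof (cases "c \<in> set vs")
    case True
    then obtain i where "i < length vs" "vs ! i = c" by (auto simp: in_set_conv_nth)
    then show ?thesis using is_tpath_take[OF vs] by metis
  next
    case False
    have "is_tpath T (vs @ [c]) a c"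
      unfolding is_tpath_def
    proof (intro conjI allI impI)
      show "distinct (vs @ [c])" using vs False by (simp add: is_tpath_def)
      show "hd (vs @ [c]) = a" using vs by (simp add: is_tpath_def)
      fix i assume i: "Suc i < length (vs @ [c])"
      show "((vs @ [c]) ! i, (vs @ [c]) ! Suc i) \<in> T \<or> ((vs @ [c]) ! Suc i, (vs @ [c]) ! i) \<in> T"
      proof (cases "Suc i < length vs")
        case True
        then show ?thesis using vs by (simp add: is_tpath_def nth_append)
      next
        case False
        then have "i = length vs - 1" "vs \<noteq> []" using i vs by (auto simp: is_tpath_def)
        then have "(vs @ [c]) ! i = b" "(vs @ [c]) ! Suc i = c"
          using vs by (auto simp: is_tpath_def nth_append last_conv_nth)
        then show ?thesis using \<open>(b, c) \<in> usym T\<close> by (auto simp: usym_def)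
      qed
    qed auto
    then show ?thesis by blast
  qed
qed

lemma is_tpath_rtrancl_avoiding:
  assumes "is_tpath T vs a b" and "x \<notin> set vs" and "x \<in> {fst e, snd e}"
  shows "(a, b) \<in> (usym (T - {e}))\<^sup>*"
proof -
  have "(hd vs, last vs) \<in> (usym (T - {e}))\<^sup>*"
  proof (rule walk_in_rtrancl)
    fix i assume i: "Suc i < length vs"
    then have "vs ! i \<in> set vs" "vs ! Suc i \<in> set vs" by simp_all
    then have "(vs ! i, vs ! Suc i) \<noteq> e" "(vs ! Suc i, vs ! i) \<noteq> e" using assms(2,3) by auto
    then show "(vs ! i, vs ! Suc i) \<in> usym (T - {e})"
      using is_tpath_step[OF assms(1) i] by (simp add: usym_def)
  qed (use assms(1) in \<open>simp add: is_tpath_def\<close>)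
  then show ?thesis using assms(1) by (simp add: is_tpath_def)
qed

lemma forest_second_vertex_unique:
  assumes "forest T"
    and y: "(a, y) \<in> usym T" "a \<notin> set (y # p)" "is_tpath T (y # p) y b"
    and z: "(a, z) \<in> usym T" "a \<notin> set (z # q)" "is_tpath T (z # q) z b"
  shows "y = z"
proof (rule ccontr)
  assume "y \<noteq> z"
  obtain e where e: "e \<in> T" "e = (a, y) \<or> e = (y, a)" using y(1) by (auto simp: usym_def)
  let ?R = "usym (T - {e})"
  have "(y, b) \<in> ?R\<^sup>*" using is_tpath_rtrancl_avoiding[OF y(3,2), of e] e(2) by auto
  moreover have "(z, b) \<in> ?R\<^sup>*" using is_tpath_rtrancl_avoiding[OF z(3,2), of e] e(2) by auto
  moreover have "(a, z) \<in> ?R" using z(1) e(2) \<open>y \<noteq> z\<close> by (auto simp: usym_def)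
  ultimately have "(a, y) \<in> ?R\<^sup>*" "(y, a) \<in> ?R\<^sup>*"
    by (meson converse_rtrancl_into_rtrancl rtrancl_trans rtrancl_usym_sym)+
  with e \<open>forest T\<close> show False by (auto simp: forest_def)
qed

lemma forest_is_tpath_unique:
  assumes "forest T"
  shows "is_tpath T p a b \<Longrightarrow> is_tpath T q a b \<Longrightarrow> p = q"
proof (induction p arbitrary: a q)
  case Nil
  then show ?case by (simp add: is_tpath_def)
next
  case (Cons x p)
  show ?case
  proof (cases p)
    case Nil
    then have "x = a" "a = b" using Cons.prems(1) by (simp_all add: is_tpath_singleton)
    then show ?thesis using Nil is_tpath_same_ends[of T q a] Cons.prems(2) by simp
  next
    case (Cons y p')
    have "a \<noteq> b"
    proof
      assume "a = b"
      then have "x # p = [a]" using Cons.prems(1) is_tpath_same_ends by metis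
      with \<open>p = y # p'\<close> show False by simp
    qed
    moreover have "q \<noteq> []" "hd q = a" "last q = b" using Cons.prems(2) by (simp_all add: is_tpath_def)
    ultimately obtain z q' where q: "q = a # z # q'" by (cases q rule: remdups_adj.cases) auto
    have p: "x = a" "(a, y) \<in> usym T" "a \<notin> set (y # p')" "is_tpath T (y # p') y b"
      using Cons.prems(1) unfolding \<open>p = y # p'\<close> is_tpath_Cons_Cons by auto
    have q': "(a, z) \<in> usym T" "a \<notin> set (z # q')" "is_tpath T (z # q') z b"
      using Cons.prems(2) unfolding q is_tpath_Cons_Cons by simp_all
    have "y = z" using forest_second_vertex_unique[OF assms p(2-4) q'] .
    then show ?thesis using Cons.IH[of y "z # q'"] p(1,4) q'(3) q \<open>p = y # p'\<close> by simp
  qed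
qed

lemma tpath_eq:
  assumes "forest T" "is_tpath T vs a b"
  shows "tpath T a b = vs"
proof -
  have "\<exists>!vs. is_tpath T vs a b" using assms(2) forest_is_tpath_unique[OF assms(1)] by blast
  then show ?thesis unfolding tpath_def using assms(2) by (rule the1_equality)
qed

lemma is_tpath_tpath:
  assumes "forest T" "(a, b) \<in> (usym T)\<^sup>*"
  shows "is_tpath T (tpath T a b) a b"
proof -
  obtain vs where "is_tpath T vs a b" using is_tpath_exists[OF assms(2)] ..
  then show ?thesis using tpath_eq[OF assms(1)] by simp
qed

lemma forest_tpath_adjacent:
  assumes "forest T" and P: "is_tpath T P w s" and uw: "(u, w) \<in> usym T" "u \<noteq> w"
  shows "is_tpath T (u # P) u s \<or> (\<exists>P'. P = w # P' \<and> is_tpath T P' u s)"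
proof (cases "u \<in> set P")
  case False
  obtain P' where "P = w # P'" using P by (cases P) (auto simp: is_tpath_def)
  then show ?thesis using P False uw(1) by (simp add: is_tpath_Cons_Cons)
next
  case True
  then obtain i where i: "i < length P" "P ! i = u" by (auto simp: in_set_conv_nth)
  have "is_tpath T [w, u] w u" using uw by (auto simp: is_tpath_Cons_Cons is_tpath_singleton usym_def)
  then have "take (Suc i) P = [w, u]"
    using forest_is_tpath_unique[OF assms(1) is_tpath_take[OF P i(1)], of "[w, u]"] i(2) by simp
  then have "length (take (Suc i) P) = 2" by simp
  then have "i = 1" using i(1) by simp
  obtain P' where P': "P = w # P'" using P by (cases P) (auto simp: is_tpath_def)
  with i \<open>i = 1\<close> obtain P'' where "P' = u # P''" by (cases P') auto
  then show ?thesis using P P' by (auto simp: is_tpath_Cons_Cons)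
qed

section \<open>Tree-induced voltages and cycle updates\<close>

definition path_sum :: "('v \<Rightarrow> 'v \<Rightarrow> real) \<Rightarrow> 'v list \<Rightarrow> real" where
  "path_sum \<phi> vs = (\<Sum>i<length vs - 1. \<phi> (vs ! i) (vs ! Suc i))"

lemma path_sum_Cons: "vs \<noteq> [] \<Longrightarrow> path_sum \<phi> (x # vs) = \<phi> x (hd vs) + path_sum \<phi> vs"
proof -
  assume "vs \<noteq> []"
  then obtain n where n: "length vs = Suc n" by (cases vs) auto
  have "path_sum \<phi> (x # vs) = (\<Sum>i<Suc n. \<phi> ((x # vs) ! i) ((x # vs) ! Suc i))"
    by (simp add: path_sum_def n)
  also have "\<dots> = \<phi> x (vs ! 0) + (\<Sum>i<n. \<phi> (vs ! i) (vs ! Suc i))"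
    by (subst sum.lessThan_Suc_shift) simp
  finally show ?thesis using \<open>vs \<noteq> []\<close> n by (simp add: path_sum_def hd_conv_nth)
qed

lemma path_sum_telescope:
  assumes "vs \<noteq> []" and "\<And>i. Suc i < length vs \<Longrightarrow> \<phi> (vs ! i) (vs ! Suc i) = v (vs ! i) - v (vs ! Suc i)"
  shows "path_sum \<phi> vs = v (hd vs) - v (last vs)"
proof -
  have "path_sum \<phi> vs = (\<Sum>i<length vs - 1. v (vs ! i) - v (vs ! Suc i))"
    unfolding path_sum_def using assms(2) by (intro sum.cong) auto
  also have "\<dots> = v (vs ! 0) - v (vs ! (length vs - 1))" by (rule sum_lessThan_telescope')
  finally show ?thesis using assms(1) by (simp add: hd_conv_nth last_conv_nth)
qed

text \<open>The paper's antisymmetry convention \<open>f(b, a) = -f(a, b)\<close> for edge functions.\<close>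

definition oriented :: "('v \<times> 'v) set \<Rightarrow> ('v \<times> 'v \<Rightarrow> real) \<Rightarrow> 'v \<Rightarrow> 'v \<Rightarrow> real" where
  "oriented E h u w = (if (u, w) \<in> E then h (u, w) else - h (w, u))"

definition edge_sign :: "'v \<times> 'v \<Rightarrow> 'v \<Rightarrow> 'v \<Rightarrow> real" where
  "edge_sign x u w = (if x = (u, w) then 1 else if x = (w, u) then -1 else 0)"

lemma tflow_eq_path_sum: "tflow T a b x = path_sum (edge_sign x) (tpath T a b)"
  by (simp add: tflow_def path_sum_def edge_sign_def Let_def)

lemma tvolt_eq_path_sum: "tvolt E r T s g a = path_sum (oriented E (\<lambda>e. r e * g e)) (tpath T a s)"
  unfolding tvolt_def path_sum_def oriented_def Let_def by (auto intro!: sum.cong)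

locale tree_network =
  fixes V :: "'v set" and E T :: "('v \<times> 'v) set" and r :: "'v \<times> 'v \<Rightarrow> real"
  assumes finite_V: "finite V" and E_subset: "E \<subseteq> V \<times> V"
    and E_oriented: "\<forall>(a, b)\<in>E. a \<noteq> b \<and> (b, a) \<notin> E"
    and r_pos: "\<forall>e\<in>E. r e > 0"
    and spanning: "spanning_tree V E T"
begin

lemma T_subset_E: "T \<subseteq> E"
  using spanning by (simp add: spanning_tree_def)

lemma forest_T: "forest T"
  using spanning by (simp add: spanning_tree_def forest_def)

lemma finite_E: "finite E"
  using E_subset finite_V by (meson finite_SigmaI finite_subset)

lemma edge_ends: "e \<in> E \<Longrightarrow> fst e \<in> V \<and> snd e \<in> V \<and> fst e \<noteq> snd e"
  using E_subset E_oriented by (cases e) auto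

lemma is_tpath_tpath_V: "a \<in> V \<Longrightarrow> b \<in> V \<Longrightarrow> is_tpath T (tpath T a b) a b"
  using spanning by (intro is_tpath_tpath[OF forest_T]) (auto simp: spanning_tree_def connected_on_def)

lemma tpath_step_E:
  "is_tpath T vs a b \<Longrightarrow> Suc i < length vs \<Longrightarrow> (vs ! i, vs ! Suc i) \<in> E \<or> (vs ! Suc i, vs ! i) \<in> E"
  using T_subset_E by (auto simp: is_tpath_def)

lemma tpath_step_neq: "is_tpath T vs a b \<Longrightarrow> Suc i < length vs \<Longrightarrow> vs ! i \<noteq> vs ! Suc i"
  by (simp add: is_tpath_def nth_eq_iff_index_eq)

lemma oriented_swap: "(u, w) \<in> E \<or> (w, u) \<in> E \<Longrightarrow> oriented E h w u = - oriented E h u w"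
  using E_oriented by (auto simp: oriented_def)

lemma tvolt_diff_tree_edge:
  assumes s: "s \<in> V" and uw: "(u, w) \<in> usym T"
  shows "tvolt E r T s g u - tvolt E r T s g w = oriented E (\<lambda>e. r e * g e) u w"
proof -
  let ?\<phi> = "oriented E (\<lambda>e. r e * g e)"
  have uw_E: "(u, w) \<in> E \<or> (w, u) \<in> E" using uw T_subset_E by (auto simp: usym_def)
  then have "u \<in> V" "w \<in> V" "u \<noteq> w" using edge_ends[of "(u, w)"] edge_ends[of "(w, u)"] by auto
  define P where "P = tpath T w s"
  have P: "is_tpath T P w s" using is_tpath_tpath_V[OF \<open>w \<in> V\<close> s] by (simp add: P_def)
  from forest_tpath_adjacent[OF forest_T P uw \<open>u \<noteq> w\<close>]
  show ?thesis
  proof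
    assume "is_tpath T (u # P) u s"
    then have "tpath T u s = u # P" by (rule tpath_eq[OF forest_T])
    moreover have "P \<noteq> []" "hd P = w" using P by (auto simp: is_tpath_def)
    ultimately show ?thesis by (simp add: tvolt_eq_path_sum path_sum_Cons P_def[symmetric])
  next
    assume "\<exists>P'. P = w # P' \<and> is_tpath T P' u s"
    then obtain P' where P': "P = w # P'" "is_tpath T P' u s" by blast
    then have "tpath T u s = P'" "P' \<noteq> []" "hd P' = u"
      using tpath_eq[OF forest_T] by (auto simp: is_tpath_def)
    then have "tvolt E r T s g w = ?\<phi> w u + tvolt E r T s g u"
      using P' by (simp add: tvolt_eq_path_sum path_sum_Cons P_def[symmetric])
    then show ?thesis using oriented_swap[OF uw_E] by simp
  qed
qed

lemma tvolt_diff_eq_path_sum: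
  assumes "s \<in> V" "a \<in> V" "b \<in> V"
  shows "path_sum (oriented E (\<lambda>e. r e * g e)) (tpath T a b) = tvolt E r T s g a - tvolt E r T s g b"
proof -
  have P: "is_tpath T (tpath T a b) a b" using is_tpath_tpath_V[OF assms(2,3)] .
  then have "path_sum (oriented E (\<lambda>e. r e * g e)) (tpath T a b)
      = tvolt E r T s g (hd (tpath T a b)) - tvolt E r T s g (last (tpath T a b))"
    by (intro path_sum_telescope) (auto simp: is_tpath_def tvolt_diff_tree_edge[OF assms(1)] is_tpath_step)
  then show ?thesis using P by (simp add: is_tpath_def)
qed

lemma sum_edge_sign:
  assumes "u \<noteq> w" and "(u, w) \<in> E \<or> (w, u) \<in> E"
  shows "(\<Sum>x\<in>E. h x * edge_sign x u w) = oriented E h u w"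
proof (cases "(u, w) \<in> E")
  case True
  then have "(w, u) \<notin> E" using E_oriented by auto
  then have "(\<Sum>x\<in>E. h x * edge_sign x u w) = (\<Sum>x\<in>E. if x = (u, w) then h x else 0)"
    by (intro sum.cong) (auto simp: edge_sign_def)
  then show ?thesis using True finite_E by (simp add: oriented_def)
next
  case False
  then have "(\<Sum>x\<in>E. h x * edge_sign x u w) = (\<Sum>x\<in>E. if x = (w, u) then - h x else 0)"
    using assms(1) by (intro sum.cong) (auto simp: edge_sign_def)
  then show ?thesis using False assms(2) finite_E by (simp add: oriented_def)
qed

lemma sum_mult_tflow:
  assumes "a \<in> V" "b \<in> V"
  shows "(\<Sum>x\<in>E. h x * tflow T a b x) = path_sum (oriented E h) (tpath T a b)"
proof -
  define P where "P = tpath T a b"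
  have P: "is_tpath T P a b" using is_tpath_tpath_V[OF assms] by (simp add: P_def)
  have "(\<Sum>x\<in>E. h x * tflow T a b x) = (\<Sum>x\<in>E. \<Sum>i<length P - 1. h x * edge_sign x (P ! i) (P ! Suc i))"
    by (simp add: tflow_eq_path_sum path_sum_def sum_distrib_left P_def)
  also have "\<dots> = (\<Sum>i<length P - 1. \<Sum>x\<in>E. h x * edge_sign x (P ! i) (P ! Suc i))"
    by (rule sum.swap)
  also have "\<dots> = path_sum (oriented E h) P"
    unfolding path_sum_def
    by (intro sum.cong refl sum_edge_sign) (auto simp: tpath_step_neq[OF P] tpath_step_E[OF P])
  finally show ?thesis by (simp add: P_def)
qed

lemma tflow_divergence:
  assumes "a \<in> V" "b \<in> V"
  shows "(\<Sum>x\<in>E. incid x c * tflow T a b x) = (if c = a then 1 else 0) - (if c = b then 1 else 0)"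
proof -
  define P where "P = tpath T a b"
  have P: "is_tpath T P a b" using is_tpath_tpath_V[OF assms] by (simp add: P_def)
  have "path_sum (oriented E (\<lambda>x. incid x c)) P
      = (\<lambda>z. if c = z then 1 else 0) (hd P) - (\<lambda>z. if c = z then 1 else 0) (last P)"
    using P tpath_step_neq[OF P] by (intro path_sum_telescope) (auto simp: is_tpath_def oriented_def incid_def)
  then show ?thesis using P sum_mult_tflow[OF assms, of "\<lambda>x. incid x c"] by (simp add: P_def is_tpath_def)
qed

lemma tflow_potential:
  assumes "s \<in> V" "a \<in> V" "b \<in> V"
  shows "(\<Sum>x\<in>E. g x * r x * tflow T a b x) = tvolt E r T s g a - tvolt E r T s g b"
  using sum_mult_tflow[OF assms(2,3), of "\<lambda>x. r x * g x"] tvolt_diff_eq_path_sum[OF assms]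
  by (simp add: mult.commute)

lemma tflow_off_tree:
  assumes e: "e \<in> E - T" and "a \<in> V" "b \<in> V"
  shows "tflow T a b e = 0"
proof -
  define P where "P = tpath T a b"
  have P: "is_tpath T P a b" using is_tpath_tpath_V[OF assms(2,3)] by (simp add: P_def)
  have "edge_sign e (P ! i) (P ! Suc i) = 0" if "Suc i < length P" for i
    using is_tpath_step[OF P that] e T_subset_E E_oriented by (auto simp: edge_sign_def usym_def)
  then show ?thesis by (simp add: tflow_eq_path_sum path_sum_def P_def[symmetric])
qed

lemma cvec_self: "e \<in> E - T \<Longrightarrow> cvec T e e = 1"
  using tflow_off_tree[of e "fst e" "snd e"] edge_ends[of e] by (simp add: cvec_def)

lemma weighted_square_nonneg:
  assumes "x \<in> E"
  shows "0 \<le> c * r x * c"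
proof -
  have "c * r x * c = r x * (c * c)" by (simp add: mult_ac)
  moreover have "0 \<le> r x" using r_pos assms by (simp add: less_imp_le)
  ultimately show ?thesis by (metis mult_nonneg_nonneg zero_le_square)
qed

lemma Rres_nonneg: "0 \<le> Rres E r T e"
  unfolding Rres_def by (intro sum_nonneg weighted_square_nonneg)

lemma r_le_Rres:
  assumes e: "e \<in> E - T"
  shows "r e \<le> Rres E r T e"
proof -
  have "cvec T e e * r e * cvec T e e \<le> Rres E r T e"
    unfolding Rres_def using e finite_E by (intro member_le_sum weighted_square_nonneg) auto
  then show ?thesis using cvec_self[OF e] by simp
qed

lemma Rres_pos: "e \<in> E - T \<Longrightarrow> Rres E r T e > 0"
  using r_le_Rres[of e] r_pos by force

lemma Delta_eq_tvolt:
  assumes e: "e \<in> E - T" and s: "s \<in> V"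
  shows "Delta E r T e g = g e * r e - (tvolt E r T s g (fst e) - tvolt E r T s g (snd e))"
proof -
  have ends: "fst e \<in> V" "snd e \<in> V" using edge_ends[of e] e by auto
  have "Delta E r T e g
      = (\<Sum>x\<in>E. if x = e then g x * r x else 0) - (\<Sum>x\<in>E. g x * r x * tflow T (fst e) (snd e) x)"
    unfolding Delta_def cvec_def sum_subtractf[symmetric] by (intro sum.cong) (auto simp: right_diff_distrib)
  then show ?thesis using tflow_potential[OF s ends] e finite_E by simp
qed

lemma feasible_cstep:
  assumes e: "e \<in> E - T" and g: "feasible V E chi g"
  shows "feasible V E chi (cstep E r T g e)"
  unfolding feasible_def
proof
  fix c assume c: "c \<in> V"
  have ends: "fst e \<in> V" "snd e \<in> V" "fst e \<noteq> snd e" using edge_ends[of e] e by auto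
  have "(\<Sum>x\<in>E. incid x c * cvec T e x)
      = (\<Sum>x\<in>E. if x = e then incid x c else 0) - (\<Sum>x\<in>E. incid x c * tflow T (fst e) (snd e) x)"
    unfolding cvec_def sum_subtractf[symmetric] by (intro sum.cong) (auto simp: right_diff_distrib)
  also have "\<dots> = 0" using tflow_divergence[OF ends(1,2), of c] e finite_E ends(3) by (auto simp: incid_def)
  finally have cycle: "(\<Sum>x\<in>E. incid x c * cvec T e x) = 0" .
  have "(\<Sum>x\<in>E. incid x c * cstep E r T g e x)
      = (\<Sum>x\<in>E. incid x c * g x) - Delta E r T e g / Rres E r T e * (\<Sum>x\<in>E. incid x c * cvec T e x)"
    unfolding cstep_def by (simp add: right_diff_distrib sum_subtractf sum_distrib_left mult.left_commute)
  also have "\<dots> = chi c" using cycle g c by (simp add: feasible_def)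
  finally show "(\<Sum>x\<in>E. incid x c * cstep E r T g e x) = chi c" .
qed

lemma energy_cstep:
  assumes e: "e \<in> E - T"
  shows "energy E r (cstep E r T g e) = energy E r g - (Delta E r T e g)\<^sup>2 / Rres E r T e"
proof -
  define R where "R = Rres E r T e"
  define D where "D = Delta E r T e g"
  define \<alpha> where "\<alpha> = D / R"
  have "R > 0" using Rres_pos[OF e] by (simp add: R_def)
  have "energy E r (cstep E r T g e)
      = (\<Sum>x\<in>E. g x * r x * g x - 2 * \<alpha> * (g x * r x * cvec T e x) + \<alpha>\<^sup>2 * (cvec T e x * r x * cvec T e x))"
    unfolding energy_def cstep_def D_def[symmetric] R_def[symmetric] \<alpha>_def[symmetric]
    by (intro sum.cong) (auto simp: algebra_simps power2_eq_square)
  also have "\<dots> = energy E r g - 2 * \<alpha> * D + \<alpha>\<^sup>2 * R"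
    by (simp add: sum.distrib sum_subtractf sum_distrib_left energy_def D_def R_def Delta_def Rres_def)
  also have "\<dots> = energy E r g - D\<^sup>2 / R"
    using \<open>R > 0\<close> by (simp add: \<alpha>_def field_simps power2_eq_square)
  finally show ?thesis by (simp add: D_def R_def)
qed

lemma incid_pairing:
  assumes "e \<in> E"
  shows "(\<Sum>a\<in>V. incid e a * v a) = v (fst e) - v (snd e)"
proof -
  have ends: "fst e \<in> V" "snd e \<in> V" "fst e \<noteq> snd e" using edge_ends[OF assms] by auto
  have "(\<Sum>a\<in>V. incid e a * v a) = (\<Sum>a\<in>V. if a = fst e then v a else 0) - (\<Sum>a\<in>V. if a = snd e then v a else 0)"
    unfolding sum_subtractf[symmetric] using ends by (intro sum.cong) (auto simp: incid_def)
  then show ?thesis using ends finite_V by simp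
qed

lemma feasible_pairing:
  assumes "feasible V E chi g"
  shows "(\<Sum>a\<in>V. v a * chi a) = (\<Sum>e\<in>E. g e * (v (fst e) - v (snd e)))"
proof -
  have "(\<Sum>a\<in>V. v a * chi a) = (\<Sum>a\<in>V. \<Sum>e\<in>E. g e * (incid e a * v a))"
  proof (intro sum.cong refl)
    fix a assume "a \<in> V"
    then have "chi a = (\<Sum>e\<in>E. incid e a * g e)" using assms by (simp add: feasible_def)
    then show "v a * chi a = (\<Sum>e\<in>E. g e * (incid e a * v a))" by (simp add: sum_distrib_left mult_ac)
  qed
  also have "\<dots> = (\<Sum>e\<in>E. \<Sum>a\<in>V. g e * (incid e a * v a))" by (rule sum.swap)
  also have "\<dots> = (\<Sum>e\<in>E. g e * (v (fst e) - v (snd e)))"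
    by (intro sum.cong) (auto simp: sum_distrib_left[symmetric] incid_pairing)
  finally show ?thesis .
qed

lemma lap_quadratic_form:
  "(\<Sum>a\<in>V. \<Sum>b\<in>V. v a * lap E r a b * v b) = (\<Sum>e\<in>E. (v (fst e) - v (snd e))\<^sup>2 / r e)"
proof -
  have "(\<Sum>a\<in>V. \<Sum>b\<in>V. v a * lap E r a b * v b)
      = (\<Sum>a\<in>V. \<Sum>b\<in>V. \<Sum>e\<in>E. (1 / r e) * ((incid e a * v a) * (incid e b * v b)))"
    unfolding lap_def by (auto simp: sum_distrib_left sum_distrib_right mult_ac intro!: sum.cong)
  also have "\<dots> = (\<Sum>a\<in>V. \<Sum>e\<in>E. \<Sum>b\<in>V. (1 / r e) * ((incid e a * v a) * (incid e b * v b)))"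
    by (intro sum.cong refl sum.swap)
  also have "\<dots> = (\<Sum>e\<in>E. \<Sum>a\<in>V. \<Sum>b\<in>V. (1 / r e) * ((incid e a * v a) * (incid e b * v b)))"
    by (rule sum.swap)
  also have "\<dots> = (\<Sum>e\<in>E. (1 / r e) * ((\<Sum>a\<in>V. incid e a * v a) * (\<Sum>b\<in>V. incid e b * v b)))"
    by (simp only: sum_distrib_left sum_distrib_right) (intro sum.cong refl sum.swap)
  also have "\<dots> = (\<Sum>e\<in>E. (v (fst e) - v (snd e))\<^sup>2 / r e)"
    by (intro sum.cong) (auto simp: incid_pairing power2_eq_square)
  finally show ?thesis .
qed

lemma gap_eq_sum_sq:
  assumes "feasible V E chi g"
  shows "gap V E r chi g v = (\<Sum>e\<in>E. (g e * r e - (v (fst e) - v (snd e)))\<^sup>2 / r e)"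
proof -
  have "gap V E r chi g v = (\<Sum>e\<in>E. g e * r e * g e - 2 * (g e * (v (fst e) - v (snd e)))
                                     + (v (fst e) - v (snd e))\<^sup>2 / r e)"
    by (simp add: gap_def dual_energy_def energy_def feasible_pairing[OF assms] lap_quadratic_form
        sum.distrib sum_subtractf sum_distrib_left)
  also have "\<dots> = (\<Sum>e\<in>E. (g e * r e - (v (fst e) - v (snd e)))\<^sup>2 / r e)"
    using r_pos by (intro sum.cong) (auto simp: field_simps power2_eq_square)
  finally show ?thesis .
qed

lemma gap_tvolt_eq_sum_off_tree:
  assumes "feasible V E chi g" and s: "s \<in> V"
  shows "gap V E r chi g (tvolt E r T s g) = (\<Sum>e\<in>E - T. (Delta E r T e g)\<^sup>2 / r e)"
proof -
  let ?v = "tvolt E r T s g"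
  let ?t = "\<lambda>e. (g e * r e - (?v (fst e) - ?v (snd e)))\<^sup>2 / r e"
  have "?t e = 0" if "e \<in> T" for e
  proof -
    have "(fst e, snd e) \<in> usym T" "e \<in> E" using that T_subset_E by (auto simp: usym_def)
    then show ?thesis using tvolt_diff_tree_edge[OF s, of "fst e" "snd e" g] by (simp add: oriented_def)
  qed
  then have "sum ?t T = 0" by (rule sum.neutral[rule_format])
  moreover have "sum ?t E = sum ?t (E - T) + sum ?t T" by (rule sum.subset_diff[OF T_subset_E finite_E])
  ultimately have "sum ?t E = sum ?t (E - T)" by simp
  also have "\<dots> = (\<Sum>e\<in>E - T. (Delta E r T e g)\<^sup>2 / r e)"
    by (intro sum.cong) (auto simp: Delta_eq_tvolt[OF _ s])
  finally show ?thesis using gap_eq_sum_sq[OF assms(1)] by simp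
qed

definition edge_prob :: "'v \<times> 'v \<Rightarrow> real" where
  "edge_prob e = (if e \<in> E - T then Rres E r T e / (r e * tcond E r T) else 0)"

lemma tcond_pos: "E - T \<noteq> {} \<Longrightarrow> tcond E r T > 0"
  unfolding tcond_def using finite_E Rres_pos r_pos by (intro sum_pos) auto

context
  assumes off_tree: "E - T \<noteq> {}"
begin

lemma edge_prob_nonneg: "0 \<le> edge_prob e"
  using tcond_pos[OF off_tree] Rres_nonneg[of e] r_pos by (auto simp: edge_prob_def)

lemma sum_edge_prob: "(\<Sum>e\<in>E - T. edge_prob e) = 1"
proof -
  have "(\<Sum>e\<in>E - T. edge_prob e) = (\<Sum>e\<in>E - T. Rres E r T e / r e) / tcond E r T"
    by (simp add: edge_prob_def sum_divide_distrib)
  then show ?thesis using tcond_pos[OF off_tree] by (simp add: tcond_def)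
qed

lemma pmf_pdist: "pmf (pdist E r T) e = edge_prob e"
  and set_pmf_pdist: "set_pmf (pdist E r T) \<subseteq> E - T"
proof -
  have "(\<integral>\<^sup>+x. ennreal (edge_prob x) \<partial>count_space UNIV) = (\<Sum>x\<in>E - T. ennreal (edge_prob x))"
    using finite_E
    by (subst nn_integral_count_space_eq[where B = "E - T"]) (auto simp: edge_prob_def nn_integral_count_space_finite)
  also have "\<dots> = 1" using edge_prob_nonneg sum_edge_prob by simp
  finally have prob: "(\<integral>\<^sup>+x. ennreal (edge_prob x) \<partial>count_space UNIV) = 1" .
  have pdist: "pdist E r T = embed_pmf edge_prob" by (simp add: pdist_def edge_prob_def[abs_def])
  show "pmf (pdist E r T) e = edge_prob e"
    unfolding pdist by (rule pmf_embed_pmf[OF edge_prob_nonneg prob])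
  show "set_pmf (pdist E r T) \<subseteq> E - T"
    unfolding pdist set_embed_pmf[OF edge_prob_nonneg prob] by (auto simp: edge_prob_def)
qed

lemma expectation_pdist: "measure_pmf.expectation (pdist E r T) h = (\<Sum>e\<in>E - T. h e * edge_prob e)"
  using pmf_pdist set_pmf_pdist finite_E by (subst integral_measure_pmf_real[of "E - T"]) auto

lemma gap_eq_expected_energy_decrease:
  assumes "feasible V E chi g" and "s \<in> V"
  shows "gap V E r chi g (tvolt E r T s g) =
     tcond E r T * (energy E r g - measure_pmf.expectation (pdist E r T) (\<lambda>e. energy E r (cstep E r T g e)))"
proof -
  define \<tau> where "\<tau> = tcond E r T"
  have "\<tau> > 0" using tcond_pos[OF off_tree] by (simp add: \<tau>_def)
  have "energy E r (cstep E r T g e) * edge_prob e = energy E r g * edge_prob e - (Delta E r T e g)\<^sup>2 / r e / \<tau>"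
    if "e \<in> E - T" for e
  proof -
    have "Rres E r T e > 0" "r e > 0" using Rres_pos[OF that] r_pos that by auto
    then show ?thesis
      unfolding energy_cstep[OF that] using that \<open>\<tau> > 0\<close> by (simp add: edge_prob_def \<tau>_def field_simps)
  qed
  then have "measure_pmf.expectation (pdist E r T) (\<lambda>e. energy E r (cstep E r T g e))
      = energy E r g - (\<Sum>e\<in>E - T. (Delta E r T e g)\<^sup>2 / r e) / \<tau>"
    by (simp add: expectation_pdist sum_subtractf sum_distrib_left[symmetric] sum_edge_prob sum_divide_distrib)
  then show ?thesis
    using \<open>\<tau> > 0\<close> gap_tvolt_eq_sum_off_tree[OF assms] by (simp add: \<tau>_def[symmetric])
qed

lemma random_descent_cstep:
  assumes "s \<in> V"
  shows "random_descent (pdist E r T) (\<lambda>e g. cstep E r T g e) (feasible V E chi) (energy E r)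
           (\<lambda>g. gap V E r chi g (tvolt E r T s g)) (tcond E r T)"
  using set_pmf_pdist finite_E feasible_cstep gap_eq_expected_energy_decrease[OF _ assms]
  by unfold_locales (auto intro: finite_subset)

end

end

theorem lemma7p3:
  fixes V :: "'v set" and E T :: "('v \<times> 'v) set" and r :: "'v \<times> 'v \<Rightarrow> real"
    and chi :: "'v \<Rightarrow> real" and f fstar :: "'v \<times> 'v \<Rightarrow> real" and s :: 'v and \<epsilon> :: real
  assumes "finite V" and "E \<subseteq> V \<times> V"
    and "\<forall>(a, b)\<in>E. a \<noteq> b \<and> (b, a) \<notin> E"
    and "\<forall>e\<in>E. r e > 0"
    and "connected_on V E"
    and "(\<Sum>a\<in>V. chi a) = 0"
    and "spanning_tree V E T"
    and "s \<in> V"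
    and "E - T \<noteq> {}"
    and "\<epsilon> \<ge> 0"
    and "feasible V E chi fstar"
    and "\<forall>g. feasible V E chi g \<longrightarrow> energy E r fstar \<le> energy E r g"
    and "feasible V E chi f"
    and "energy E r f \<le> (1 + \<epsilon>) * energy E r fstar"
  shows "measure_pmf.expectation
           (bind_pmf (pmf_of_set {0..<nat \<lceil>tcond E r T\<rceil>}) (\<lambda>k.
              map_pmf (\<lambda>es. fold (\<lambda>e g. cstep E r T g e) es f) (iid_list (pdist E r T) k)))
           (\<lambda>g. gap V E r chi g (tvolt E r T s g))
         \<le> \<epsilon> * energy E r fstar"
proof -
  interpret tree_network V E T r
    using assms(1-4,7) by unfold_locales
  interpret random_descent "pdist E r T" "\<lambda>e g. cstep E r T g e" "feasible V E chi" "energy E r"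
      "\<lambda>g. gap V E r chi g (tvolt E r T s g)" "tcond E r T"
    using random_descent_cstep[OF assms(9,8)] .
  show ?thesis
    using expected_gap_uniform_stop_le[OF assms(13) _ tcond_pos[OF assms(9)] assms(14)] assms(12) by blast
qed

end
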